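(* Let $A,B\in M_n(\mathbb{R}_+)$ be nilpotent and let $C=[A,B]_\oplus = AB\oplus BA$. If $AC=BC=0$, then $A$ and $B$ are simultaneously triangularizable.
   Context: Max algebra: $\mathbb{R}_+$ the nonnegative reals with $a\oplus b=\max\{a,b\}$ and ordinary multiplication; for $A,B\in M_n(\mathbb{R}_+)$, $(AB)_{ij}=\max_k a_{ik}b_{kj}$ and $(A\oplus B)_{ij}=\max\{a_{ij},b_{ij}\}$. A matrix is nilpotent if some power (max-product) is $0$. $GL_n(\mathbb{R}_+)$ is the set of matrices invertible under this product (the generalized permutation matrices). $A,B$ are simultaneously triangularizable if there is one $P\in GL_n(\mathbb{R}_+)$ with both $P^{-1}AP$ and $P^{-1}BP$ upper triangular. *)

theory Defs
  imports Main "HOL.Real"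
begin

text \<open>n x n matrices over the max algebra R_+, represented as functions
  nat => nat => real; only entries with indices i, j < n are meaningful.\<close>

definition nonneg_mat :: "nat \<Rightarrow> (nat \<Rightarrow> nat \<Rightarrow> real) \<Rightarrow> bool" where
  "nonneg_mat n A \<longleftrightarrow> (\<forall>i<n. \<forall>j<n. A i j \<ge> 0)"

text \<open>Max-product: (AB)_ij = max_k a_ik b_kj (empty max taken as 0, only relevant for n = 0).\<close>
definition mmult :: "nat \<Rightarrow> (nat \<Rightarrow> nat \<Rightarrow> real) \<Rightarrow> (nat \<Rightarrow> nat \<Rightarrow> real) \<Rightarrow> (nat \<Rightarrow> nat \<Rightarrow> real)" where
  "mmult n A B = (\<lambda>i j. Max (insert 0 ((\<lambda>k. A i k * B k j) ` {..<n})))"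

definition mplus :: "(nat \<Rightarrow> nat \<Rightarrow> real) \<Rightarrow> (nat \<Rightarrow> nat \<Rightarrow> real) \<Rightarrow> (nat \<Rightarrow> nat \<Rightarrow> real)" where
  "mplus A B = (\<lambda>i j. max (A i j) (B i j))"

definition mat_eq :: "nat \<Rightarrow> (nat \<Rightarrow> nat \<Rightarrow> real) \<Rightarrow> (nat \<Rightarrow> nat \<Rightarrow> real) \<Rightarrow> bool" where
  "mat_eq n A B \<longleftrightarrow> (\<forall>i<n. \<forall>j<n. A i j = B i j)"

definition zero_mat :: "nat \<Rightarrow> nat \<Rightarrow> real" where
  "zero_mat = (\<lambda>i j. 0)"

definition id_mat :: "nat \<Rightarrow> nat \<Rightarrow> real" where
  "id_mat = (\<lambda>i j. if i = j then 1 else 0)"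

fun mpow :: "nat \<Rightarrow> (nat \<Rightarrow> nat \<Rightarrow> real) \<Rightarrow> nat \<Rightarrow> (nat \<Rightarrow> nat \<Rightarrow> real)" where
  "mpow n A 0 = id_mat"
| "mpow n A (Suc m) = mmult n (mpow n A m) A"

definition max_nilpotent :: "nat \<Rightarrow> (nat \<Rightarrow> nat \<Rightarrow> real) \<Rightarrow> bool" where
  "max_nilpotent n A \<longleftrightarrow> (\<exists>m. mat_eq n (mpow n A m) zero_mat)"

definition max_invertible :: "nat \<Rightarrow> (nat \<Rightarrow> nat \<Rightarrow> real) \<Rightarrow> (nat \<Rightarrow> nat \<Rightarrow> real) \<Rightarrow> bool" where
  "max_invertible n P Q \<longleftrightarrow> nonneg_mat n P \<and> nonneg_mat n Q \<and>
     mat_eq n (mmult n P Q) id_mat \<and> mat_eq n (mmult n Q P) id_mat"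

definition upper_triangular :: "nat \<Rightarrow> (nat \<Rightarrow> nat \<Rightarrow> real) \<Rightarrow> bool" where
  "upper_triangular n A \<longleftrightarrow> (\<forall>i<n. \<forall>j<n. j < i \<longrightarrow> A i j = 0)"

definition simult_triangularizable :: "nat \<Rightarrow> (nat \<Rightarrow> nat \<Rightarrow> real) \<Rightarrow> (nat \<Rightarrow> nat \<Rightarrow> real) \<Rightarrow> bool" where
  "simult_triangularizable n A B \<longleftrightarrow> (\<exists>P Pinv. max_invertible n P Pinv \<and>
     upper_triangular n (mmult n (mmult n Pinv A) P) \<and>
     upper_triangular n (mmult n (mmult n Pinv B) P))"

end

theory Submission
  imports Defs
begin

(* Let G be the digraph on {0..<n} with an edge u -> v whenever A u v > 0 or B u v > 0.
  An entry C y u is positive exactly when some two-step walk y -> z -> u uses one edge of A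
  and one of B, and AC = BC = 0 says that no edge of G ends in such a y.  Hence every walk of
  G, after its first edge, uses only edges of A or only edges of B, and the nilpotency of A
  and B bounds the length of such walks.  So G has no long walks; numbering the vertices by
  decreasing length of the longest walk starting there gives a permutation matrix that
  conjugates A and B simultaneously to upper triangular form. *)

fun walk :: "('a \<Rightarrow> 'a \<Rightarrow> bool) \<Rightarrow> nat \<Rightarrow> 'a \<Rightarrow> 'a \<Rightarrow> bool" where
  "walk E 0 x y \<longleftrightarrow> x = y"
| "walk E (Suc m) x y \<longleftrightarrow> (\<exists>z. walk E m x z \<and> E z y)"

lemma walk_Suc_left: "walk E (Suc m) x y \<longleftrightarrow> (\<exists>z. E x z \<and> walk E m z y)"
  by (induction m arbitrary: y) auto

lemma walk_add_prefix: "walk E (a + b) x y \<Longrightarrow> \<exists>z. walk E a x z"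
  by (induction b arbitrary: y) auto

lemma walk_height:
  assumes no_walk: "\<And>x y. \<not> walk E K x y"
  obtains h :: "'a \<Rightarrow> nat" where "\<And>x y. E x y \<Longrightarrow> h y < h x"
proof
  define W where "W x = {k. \<exists>w. walk E k x w}" for x
  have "k < K" if "walk E k x w" for k x w
  proof (rule ccontr)
    assume "\<not> k < K"
    then have "walk E (K + (k - K)) x w"
      using that by simp
    then show False
      using walk_add_prefix[of E K "k - K" x w] no_walk by blast
  qed
  then have "W x \<subseteq> {..<K}" for x
    by (auto simp: W_def)
  then have fin: "finite (W x)" for x
    using finite_subset by blast
  have "walk E 0 x x" for x
    by simp
  then have "0 \<in> W x" for x
    unfolding W_def by blast
  then have "Max (W x) \<in> W x" for x
    using Max_in[OF fin] by blast
  then have longest: "\<exists>w. walk E (Max (W x)) x w" for x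
    unfolding W_def by simp
  fix x y assume "E x y"
  with longest[of y] have "\<exists>w. walk E (Suc (Max (W y))) x w"
    unfolding walk_Suc_left by blast
  then have "Suc (Max (W y)) \<in> W x"
    unfolding W_def by blast
  then have "Suc (Max (W y)) \<le> Max (W x)"
    by (rule Max_ge[OF fin])
  then show "Max (W y) < Max (W x)"
    by simp
qed

lemma order_by_height:
  fixes h :: "nat \<Rightarrow> nat"
  assumes height: "\<And>x y. E x y \<Longrightarrow> h y < h x"
  obtains \<sigma> where "bij_betw \<sigma> {..<n} {..<n}"
    and "\<And>i j. i < n \<Longrightarrow> j < n \<Longrightarrow> E (\<sigma> i) (\<sigma> j) \<Longrightarrow> i < j"
proof
  define xs where "xs = sort_key (\<lambda>x. - int (h x)) [0..<n]"
  have len: "length xs = n" and sorted: "sorted (map (\<lambda>x. - int (h x)) xs)"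
    by (simp_all add: xs_def)
  show "bij_betw ((!) xs) {..<n} {..<n}"
    by (rule bij_betw_nth) (auto simp: xs_def)
  fix i j assume ij: "i < n" "j < n" and edge: "E (xs ! i) (xs ! j)"
  show "i < j"
  proof (rule ccontr)
    assume "\<not> i < j"
    then have "h (xs ! i) \<le> h (xs ! j)"
      using sorted_nth_mono[OF sorted, of j i] ij len by simp
    with height[OF edge] show False
      by simp
  qed
qed

definition support :: "nat \<Rightarrow> (nat \<Rightarrow> nat \<Rightarrow> real) \<Rightarrow> nat \<Rightarrow> nat \<Rightarrow> bool" where
  "support n A u v \<longleftrightarrow> u < n \<and> v < n \<and> 0 < A u v"

lemma support_mplus: "support n (mplus A B) u v \<longleftrightarrow> support n A u v \<or> support n B u v"
  by (auto simp: support_def mplus_def)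

lemma mmult_ge: "k < n \<Longrightarrow> M i k * N k j \<le> mmult n M N i j"
  by (auto simp: mmult_def intro!: Max_ge)

lemma mmult_eqI:
  assumes "\<And>k. k < n \<Longrightarrow> M i k * N k j \<le> c" and "0 \<le> c"
    and "c = 0 \<or> (\<exists>k<n. M i k * N k j = c)"
  shows "mmult n M N i j = c"
  unfolding mmult_def using assms by (intro Max_eqI) auto

lemma mpow_pos_if_walk: "walk (support n A) m x y \<Longrightarrow> 0 < mpow n A m x y"
proof (induction m arbitrary: y)
  case 0
  then show ?case by (simp add: id_mat_def)
next
  case (Suc m)
  then obtain z where z: "walk (support n A) m x z" "support n A z y"
    by auto
  then have "0 < mpow n A m x z * A z y"
    using Suc.IH[OF z(1)] z(2) by (simp add: support_def)
  also have "\<dots> \<le> mpow n A (Suc m) x y"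
    using z(2) by (simp add: support_def mmult_ge)
  finally show ?case .
qed

lemma walk_support_bounded:
  assumes "max_nilpotent n A"
  obtains m where "\<And>x y. x < n \<Longrightarrow> \<not> walk (support n A) m x y"
proof -
  obtain m where zero: "mat_eq n (mpow n A m) zero_mat"
    using assms by (auto simp: max_nilpotent_def)
  have "\<not> walk (support n A) m x y" if "x < n" for x y
  proof
    assume walk: "walk (support n A) m x y"
    then have "y < n"
      using \<open>x < n\<close> by (cases m) (auto simp: support_def)
    with zero \<open>x < n\<close> mpow_pos_if_walk[OF walk] show False
      by (simp add: mat_eq_def zero_mat_def)
  qed
  then show thesis
    by (rule that)
qed

definition perm_mat :: "(nat \<Rightarrow> nat) \<Rightarrow> nat \<Rightarrow> nat \<Rightarrow> real" where
  "perm_mat \<sigma> = (\<lambda>i j. if i = \<sigma> j then 1 else 0)"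

lemma mmult_perm_mat_transpose_left:
  assumes "\<sigma> i < n" and "\<And>k. k < n \<Longrightarrow> 0 \<le> M k j"
  shows "mmult n (\<lambda>i k. perm_mat \<sigma> k i) M i j = M (\<sigma> i) j"
  using assms by (intro mmult_eqI) (auto simp: perm_mat_def)

lemma mmult_perm_mat_right:
  assumes "\<sigma> j < n" and "\<And>k. k < n \<Longrightarrow> 0 \<le> M i k"
  shows "mmult n M (perm_mat \<sigma>) i j = M i (\<sigma> j)"
  using assms by (intro mmult_eqI) (auto simp: perm_mat_def)

lemma max_invertible_perm_mat:
  assumes \<sigma>: "bij_betw \<sigma> {..<n} {..<n}"
  shows "max_invertible n (perm_mat \<sigma>) (\<lambda>i j. perm_mat \<sigma> j i)"
  unfolding max_invertible_def
proof (intro conjI)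
  show "nonneg_mat n (perm_mat \<sigma>)" "nonneg_mat n (\<lambda>i j. perm_mat \<sigma> j i)"
    by (auto simp: nonneg_mat_def perm_mat_def)
  have "mmult n (perm_mat \<sigma>) (\<lambda>i j. perm_mat \<sigma> j i) i j = id_mat i j" if "i < n" for i j
  proof -
    obtain k where "k < n" "\<sigma> k = i"
      using \<sigma> \<open>i < n\<close> by (metis bij_betw_iff_bijections lessThan_iff)
    then show ?thesis
      by (intro mmult_eqI) (auto simp: perm_mat_def id_mat_def)
  qed
  then show "mat_eq n (mmult n (perm_mat \<sigma>) (\<lambda>i j. perm_mat \<sigma> j i)) id_mat"
    by (simp add: mat_eq_def)
  have "mmult n (\<lambda>i j. perm_mat \<sigma> j i) (perm_mat \<sigma>) i j = perm_mat \<sigma> (\<sigma> i) j" if "i < n" for i j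
    using bij_betw_apply[OF \<sigma>] \<open>i < n\<close>
    by (intro mmult_perm_mat_transpose_left) (auto simp: perm_mat_def)
  moreover have "perm_mat \<sigma> (\<sigma> i) j = id_mat i j" if "i < n" "j < n" for i j
    using that bij_betw_imp_inj_on[OF \<sigma>] by (auto simp: perm_mat_def id_mat_def inj_on_def)
  ultimately show "mat_eq n (mmult n (\<lambda>i j. perm_mat \<sigma> j i) (perm_mat \<sigma>)) id_mat"
    by (simp add: mat_eq_def)
qed

lemma perm_mat_conjugate:
  assumes \<sigma>: "bij_betw \<sigma> {..<n} {..<n}" and M: "nonneg_mat n M" and "i < n" "j < n"
  shows "mmult n (mmult n (\<lambda>i j. perm_mat \<sigma> j i) M) (perm_mat \<sigma>) i j = M (\<sigma> i) (\<sigma> j)"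
proof -
  have \<sigma>_lt: "\<sigma> k < n" if "k < n" for k
    using bij_betw_apply[OF \<sigma>] that by auto
  have row: "mmult n (\<lambda>i j. perm_mat \<sigma> j i) M i k = M (\<sigma> i) k" if "k < n" for k
    using M that \<sigma>_lt \<open>i < n\<close> by (intro mmult_perm_mat_transpose_left) (auto simp: nonneg_mat_def)
  then show ?thesis
    using M \<sigma>_lt \<open>i < n\<close> \<open>j < n\<close>
    by (subst mmult_perm_mat_right) (auto simp: nonneg_mat_def)
qed

lemma upper_triangular_perm_mat_conjugate:
  assumes \<sigma>: "bij_betw \<sigma> {..<n} {..<n}" and M: "nonneg_mat n M"
    and ordered: "\<And>i j. i < n \<Longrightarrow> j < n \<Longrightarrow> support n M (\<sigma> i) (\<sigma> j) \<Longrightarrow> i \<le> j"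
  shows "upper_triangular n (mmult n (mmult n (\<lambda>i j. perm_mat \<sigma> j i) M) (perm_mat \<sigma>))"
  unfolding upper_triangular_def
proof (intro allI impI)
  fix i j assume ij: "i < n" "j < n" "j < i"
  then have "\<sigma> i < n" "\<sigma> j < n"
    using bij_betw_apply[OF \<sigma>] by auto
  then have "\<not> 0 < M (\<sigma> i) (\<sigma> j)"
    using ordered[of i j] ij by (auto simp: support_def)
  moreover have "0 \<le> M (\<sigma> i) (\<sigma> j)"
    using M \<open>\<sigma> i < n\<close> \<open>\<sigma> j < n\<close> by (simp add: nonneg_mat_def)
  ultimately show "mmult n (mmult n (\<lambda>i j. perm_mat \<sigma> j i) M) (perm_mat \<sigma>) i j = 0"
    using perm_mat_conjugate[OF \<sigma> M ij(1,2)] by simp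
qed

lemma simult_triangularizable_if_no_long_walk:
  assumes A: "nonneg_mat n A" and B: "nonneg_mat n B"
    and no_walk: "\<And>x y. \<not> walk (support n (mplus A B)) K x y"
  shows "simult_triangularizable n A B"
proof -
  obtain h :: "nat \<Rightarrow> nat" where "\<And>x y. support n (mplus A B) x y \<Longrightarrow> h y < h x"
    using walk_height[OF no_walk] by blast
  then obtain \<sigma> where \<sigma>: "bij_betw \<sigma> {..<n} {..<n}"
    and ordered: "\<And>i j. i < n \<Longrightarrow> j < n \<Longrightarrow> support n (mplus A B) (\<sigma> i) (\<sigma> j) \<Longrightarrow> i < j"
    using order_by_height by blast
  have "upper_triangular n (mmult n (mmult n (\<lambda>i j. perm_mat \<sigma> j i) A) (perm_mat \<sigma>))"
    by (rule upper_triangular_perm_mat_conjugate[OF \<sigma> A]) (metis ordered support_mplus less_imp_le)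
  moreover have "upper_triangular n (mmult n (mmult n (\<lambda>i j. perm_mat \<sigma> j i) B) (perm_mat \<sigma>))"
    by (rule upper_triangular_perm_mat_conjugate[OF \<sigma> B]) (metis ordered support_mplus less_imp_le)
  ultimately show ?thesis
    unfolding simult_triangularizable_def using max_invertible_perm_mat[OF \<sigma>] by blast
qed

lemma commutator_pos_if_mixed_walk:
  assumes "C = mplus (mmult n A B) (mmult n B A)"
    and "support n A y z \<and> support n B z u \<or> support n B y z \<and> support n A z u"
  shows "0 < C y u"
proof -
  have "B y z * A z u \<le> mmult n B A y u" "A y z * B z u \<le> mmult n A B y u"
    using assms(2) by (auto simp: support_def intro: mmult_ge)
  moreover have "0 < B y z * A z u \<or> 0 < A y z * B z u"
    using assms(2) by (auto simp: support_def)
  ultimately show ?thesis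
    using assms(1) by (auto simp: mplus_def)
qed

lemma commutator_row_zero_if_edge:
  assumes "mat_eq n (mmult n A C) zero_mat" and "mat_eq n (mmult n B C) zero_mat"
    and "support n (mplus A B) x y" and "u < n"
  shows "\<not> 0 < C y u"
proof
  assume "0 < C y u"
  have "x < n" "y < n"
    using assms(3) by (simp_all add: support_def)
  then have "A x y * C y u \<le> mmult n A C x u" "B x y * C y u \<le> mmult n B C x u"
    by (simp_all add: mmult_ge)
  moreover have "mmult n A C x u = 0" "mmult n B C x u = 0"
    using assms(1,2,4) \<open>x < n\<close> by (simp_all add: mat_eq_def zero_mat_def)
  moreover have "0 < A x y * C y u \<or> 0 < B x y * C y u"
    using assms(3)[unfolded support_mplus] \<open>0 < C y u\<close> by (auto simp: support_def)
  ultimately show False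
    by linarith
qed

lemma walk_after_edge_monochromatic:
  assumes C: "C = mplus (mmult n A B) (mmult n B A)"
    and AC: "mat_eq n (mmult n A C) zero_mat" and BC: "mat_eq n (mmult n B C) zero_mat"
  shows "support n (mplus A B) x y
    \<Longrightarrow> walk (support n (mplus A B)) k y w
    \<Longrightarrow> walk (support n A) k y w \<or> walk (support n B) k y w"
proof (induction k arbitrary: x y)
  case 0
  then show ?case by simp
next
  case (Suc k)
  have no_mixed: False
    if "support n A y z \<and> support n B z u \<or> support n B y z \<and> support n A z u" for z u
    using commutator_pos_if_mixed_walk[OF C that] commutator_row_zero_if_edge[OF AC BC Suc.prems(1)]
      that by (auto simp: support_def)
  obtain z where yz: "support n (mplus A B) y z"
    and zw: "walk (support n (mplus A B)) k z w"
    using Suc.prems(2) unfolding walk_Suc_left by blast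
  show ?case
  proof (cases k)
    case 0
    then show ?thesis
      using yz zw by (auto simp: support_mplus)
  next
    case (Suc k')
    consider (A) "walk (support n A) k z w" | (B) "walk (support n B) k z w"
      using Suc.IH[OF yz zw] by blast
    then show ?thesis
    proof cases
      case A
      then obtain u where "support n A z u"
        unfolding \<open>k = Suc k'\<close> walk_Suc_left by blast
      then have "support n A y z"
        using yz no_mixed support_mplus by blast
      with A show ?thesis
        unfolding walk_Suc_left by blast
    next
      case B
      then obtain u where "support n B z u"
        unfolding \<open>k = Suc k'\<close> walk_Suc_left by blast
      then have "support n B y z"
        using yz no_mixed support_mplus by blast
      with B show ?thesis
        unfolding walk_Suc_left by blast
    qed
  qed
qed

theorem theorem3p9:
  fixes n :: nat and A B :: "nat \<Rightarrow> nat \<Rightarrow> real"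
  assumes "nonneg_mat n A" and "nonneg_mat n B"
    and "max_nilpotent n A" and "max_nilpotent n B"
    and "C = mplus (mmult n A B) (mmult n B A)"
    and "mat_eq n (mmult n A C) zero_mat" and "mat_eq n (mmult n B C) zero_mat"
  shows "simult_triangularizable n A B"
proof -
  obtain mA where no_walk_A: "\<And>x y. x < n \<Longrightarrow> \<not> walk (support n A) mA x y"
    using walk_support_bounded[OF assms(3)] by blast
  obtain mB where no_walk_B: "\<And>x y. x < n \<Longrightarrow> \<not> walk (support n B) mB x y"
    using walk_support_bounded[OF assms(4)] by blast
  have "\<not> walk (support n (mplus A B)) (Suc (mA + mB)) x w" for x w
  proof
    assume "walk (support n (mplus A B)) (Suc (mA + mB)) x w"
    then obtain y where xy: "support n (mplus A B) x y"
      and yw: "walk (support n (mplus A B)) (mA + mB) y w"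
      unfolding walk_Suc_left by blast
    have "y < n"
      using xy by (auto simp: support_def)
    with walk_after_edge_monochromatic[OF assms(5-7) xy yw] no_walk_A no_walk_B show False
      using walk_add_prefix[of "support n A" mA mB y w] walk_add_prefix[of "support n B" mB mA y w]
      by (auto simp: add.commute)
  qed
  then show ?thesis
    by (rule simult_triangularizable_if_no_long_walk[OF assms(1,2)])
qed

end
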